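(* Let $S\le T_n$ be a transformation monoid and $G$ the normalizer of $S$ in $S_n$. If $a\in S$ is $\mathcal L$-related in $SG$ to an idempotent $e$ of $SG$, then $e\in S$ and $a$ is $\mathcal L$-related in $S$ to $e$.
   Context: A transformation monoid is a subsemigroup of $T_n$ containing the identity map; $G=\{g\in S_n:g^{-1}Sg=S\}$ and $SG=\{sg:s\in S,g\in G\}$, a semigroup. For a semigroup $U$, elements $a,b\in U$ are $\mathcal L$-related in $U$ if there exist $u,v\in U^1$ with $a=ub$ and $b=va$, where $U^1$ is $U$ with an identity adjoined. *)

theory Defs
  imports Main
begin

text \<open>Transformations of a finite set X (the type 'a, playing the role of {1..n}) are
  all functions X => X.  Following the usual convention in semigroup theory,
  maps act on the right: the product s g means "first s, then g", i.e. g o s.\<close>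

definition tmul :: "('a \<Rightarrow> 'a) \<Rightarrow> ('a \<Rightarrow> 'a) \<Rightarrow> ('a \<Rightarrow> 'a)" where
  "tmul s g = g \<circ> s"

definition tmonoid :: "('a \<Rightarrow> 'a) set \<Rightarrow> bool" where
  "tmonoid S \<longleftrightarrow> id \<in> S \<and> (\<forall>s\<in>S. \<forall>t\<in>S. tmul s t \<in> S)"

definition normalizer :: "('a \<Rightarrow> 'a) set \<Rightarrow> ('a \<Rightarrow> 'a) set" where
  "normalizer S = {g. bij g \<and> {tmul (tmul (inv g) s) g | s. s \<in> S} = S}"

definition SG :: "('a \<Rightarrow> 'a) set \<Rightarrow> ('a \<Rightarrow> 'a) set" where
  "SG S = {tmul s g | s g. s \<in> S \<and> g \<in> normalizer S}"

text \<open>Green's L-relation in a semigroup U of transformations: a = u b and b = v a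
  for some u, v in U^1.  Adjoining an identity to U amounts to allowing u = id.\<close>
definition L_rel :: "('a \<Rightarrow> 'a) set \<Rightarrow> ('a \<Rightarrow> 'a) \<Rightarrow> ('a \<Rightarrow> 'a) \<Rightarrow> bool" where
  "L_rel U a b \<longleftrightarrow> a \<in> U \<and> b \<in> U \<and>
     (\<exists>u \<in> insert id U. a = tmul u b) \<and> (\<exists>v \<in> insert id U. b = tmul v a)"

end

theory Submission
  imports Defs "HOL-Combinatorics.Cycles"
begin

text \<open>In composition notation the hypotheses give e = a \<circ> h \<circ> t with t \<in> S and h a
  permutation normalizing S (the case without a factor from SG being trivial).  As e is
  idempotent, e = (a \<circ> h \<circ> t)^m = a \<circ> (h \<circ> t \<circ> a)^(m-1) \<circ> h \<circ> t for every m > 0.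
  Since h \<circ> S = S \<circ> h, the map (h \<circ> t \<circ> a)^(m-1) \<circ> h equals X \<circ> h^m for some X \<in> S, and taking
  for m the order of h yields e = a \<circ> (X \<circ> t) with X \<circ> t \<in> S.  So e \<in> S, and e is L-related to a
  in S because the other half, a = e \<circ> a, holds already.\<close>

lemma tmonoid_comp_closed:
  assumes "tmonoid S" "x \<in> S" "y \<in> S"
  shows "x \<circ> y \<in> S"
  using assms unfolding tmonoid_def tmul_def by auto

lemma normalizer_comp_commute:
  assumes "h \<in> normalizer S" "s \<in> S"
  obtains s' where "s' \<in> S" "h \<circ> s = s' \<circ> h"
proof
  have "bij h" and conj_eq: "{tmul (tmul (inv h) s) h | s. s \<in> S} = S"
    using assms(1) unfolding normalizer_def by auto
  show "h \<circ> s \<circ> inv h \<in> S"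
    using conj_eq assms(2) unfolding tmul_def by (auto simp: comp_assoc)
  show "h \<circ> s = h \<circ> s \<circ> inv h \<circ> h"
    using \<open>bij h\<close> by (simp add: comp_assoc bij_is_inj)
qed

lemma normalizer_funpow_comp:
  assumes "tmonoid S" "h \<in> normalizer S" "b \<in> S"
  obtains X where "X \<in> S" "(h \<circ> b) ^^ k = X \<circ> h ^^ k"
proof (induction k arbitrary: thesis)
  case 0
  then show ?case using assms(1) unfolding tmonoid_def by auto
next
  case (Suc k)
  obtain X where X: "X \<in> S" "(h \<circ> b) ^^ k = X \<circ> h ^^ k" by (rule Suc.IH)
  have "b \<circ> X \<in> S" using tmonoid_comp_closed assms(1,3) X(1) .
  then obtain X' where X': "X' \<in> S" "h \<circ> (b \<circ> X) = X' \<circ> h"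
    using normalizer_comp_commute assms(2) by blast
  have "(h \<circ> b) ^^ Suc k = h \<circ> (b \<circ> X) \<circ> h ^^ k"
    using X(2) by (simp add: comp_assoc)
  also have "\<dots> = X' \<circ> h ^^ Suc k"
    using X'(2) by (simp add: comp_assoc)
  finally show ?case using Suc.prems X'(1) by blast
qed

lemma funpow_comp_rotate: "(f \<circ> g) ^^ n \<circ> f = f \<circ> (g \<circ> f) ^^ n"
proof (induction n)
  case (Suc n)
  have "(f \<circ> g) ^^ Suc n \<circ> f = f \<circ> g \<circ> ((f \<circ> g) ^^ n \<circ> f)"
    by (simp only: funpow.simps comp_assoc)
  also have "\<dots> = f \<circ> (g \<circ> f) ^^ Suc n"
    by (simp only: Suc.IH funpow.simps comp_assoc)
  finally show ?case .
qed simp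

lemma idempotent_funpow:
  assumes "e \<circ> e = e" "n > 0"
  shows "e ^^ n = e"
  using assms(2)
proof (induction n rule: nat_induct_non_zero)
  case (Suc n)
  then show ?case using assms(1) by simp
qed simp

lemma bij_funpow_order:
  fixes h :: "'a::finite \<Rightarrow> 'a"
  assumes "bij h"
  obtains m where "m > 0" "h ^^ m = id"
proof -
  have "h permutes UNIV"
    using assms by (intro bij_imp_permutes) auto
  then have "permutation h"
    by (simp add: permutes_imp_permutation)
  then show ?thesis
    using permutation_is_nilpotent that by metis
qed

lemma idempotent_normalizer_factor:
  fixes a :: "'a::finite \<Rightarrow> 'a"
  assumes "tmonoid S" "a \<in> S" "t \<in> S" "h \<in> normalizer S"
    and "e \<circ> e = e" "e = a \<circ> (h \<circ> t)"
  obtains w where "w \<in> S" "e = a \<circ> w"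
proof -
  obtain m where m: "m > 0" "h ^^ m = id"
    using bij_funpow_order assms(4) unfolding normalizer_def by blast
  have "t \<circ> a \<in> S" using tmonoid_comp_closed[OF assms(1,3,2)] .
  then obtain X where X: "X \<in> S" "(h \<circ> (t \<circ> a)) ^^ (m - 1) = X \<circ> h ^^ (m - 1)"
    using normalizer_funpow_comp assms(1,4) by blast
  have pow_m: "f ^^ m = f ^^ (m - 1) \<circ> f" for f :: "'a \<Rightarrow> 'a"
    using funpow_Suc_right[of "m - 1" f] m(1) by simp
  have "e = (a \<circ> (h \<circ> t)) ^^ m"
    unfolding assms(6)[symmetric] using idempotent_funpow[OF assms(5) m(1)] by simp
  also have "\<dots> = (a \<circ> (h \<circ> t)) ^^ (m - 1) \<circ> a \<circ> (h \<circ> t)"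
    by (simp only: pow_m comp_assoc)
  also have "\<dots> = a \<circ> (h \<circ> t \<circ> a) ^^ (m - 1) \<circ> (h \<circ> t)"
    by (simp only: funpow_comp_rotate)
  also have "\<dots> = a \<circ> ((h \<circ> (t \<circ> a)) ^^ (m - 1) \<circ> h) \<circ> t"
    by (simp only: comp_assoc)
  also have "(h \<circ> (t \<circ> a)) ^^ (m - 1) \<circ> h = X \<circ> h ^^ m"
    by (simp only: pow_m X(2) comp_assoc)
  finally have "e = a \<circ> (X \<circ> t)"
    by (simp only: m(2) comp_id comp_assoc)
  then show ?thesis using that tmonoid_comp_closed assms(1,3) X(1) by blast
qed

theorem lemma4p3:
  fixes S :: "('a::finite \<Rightarrow> 'a) set" and a e :: "'a \<Rightarrow> 'a"
  assumes "tmonoid S"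
    and "a \<in> S"
    and "e \<in> SG S" and "tmul e e = e"
    and "L_rel (SG S) a e"
  shows "e \<in> S \<and> L_rel S a e"
proof -
  have idem: "e \<circ> e = e" using assms(4) unfolding tmul_def .
  obtain u v where a_eq: "a = e \<circ> u" and v: "v \<in> insert id (SG S)" "e = a \<circ> v"
    using assms(5) unfolding L_rel_def tmul_def by blast
  obtain w where w: "w \<in> S" "e = a \<circ> w"
  proof (cases "v = id")
    case True
    then show ?thesis using that v(2) assms(1) unfolding tmonoid_def by auto
  next
    case False
    then obtain t h where "t \<in> S" "h \<in> normalizer S" "v = h \<circ> t"
      using v(1) unfolding SG_def tmul_def by auto
    then show ?thesis
      using idempotent_normalizer_factor assms(1,2) idem v(2) that by blast
  qed
  have "e \<in> S" using w tmonoid_comp_closed assms(1,2) by blast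
  moreover have "a = tmul a e" using a_eq idem unfolding tmul_def by (metis comp_assoc)
  moreover have "e = tmul w a" using w(2) unfolding tmul_def .
  ultimately show ?thesis using assms(2) w(1) unfolding L_rel_def by blast
qed

end
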